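(* Let $T=T(n,a,b)$ with $a\ge 0$, $b\ge a+2$ and $2(a+b)<n-1$, let $\ell=n-a-b$ and $x=x(T)$. Let $e$ be the edge of $T$ containing both $v_{\ell-b}$ and $v_{\ell-b+1}$, and let $T_1$ and $T_2$ be the components of $T-e$ containing $v_{\ell-b}$ and $v_{\ell-b+1}$, respectively. If $b\ge\frac{\ell}{2}$, then $\sigma_T(T_1)<\sigma_T(T_2)$.
   Context: Hypergraphs have edges that are vertex subsets of size at least two; distance $d_T(u,v)$ in a hypertree is the length of a shortest loose path (an alternating sequence of distinct vertices and distinct edges $(v_0,e_1,v_1,\dots,e_p,v_p)$ with $v_{i-1},v_i\in e_i$ and non-consecutive edges disjoint). $D(T)$ is the distance matrix, $\rho(T)$ its largest eigenvalue, $x(T)$ the unit positive eigenvector for $\rho(T)$. $T-e$ has vertex set $V(T)$ and edge set $E(T)\setminus\{e\}$. For a subhypergraph $H$, $\sigma_T(H)=\sum_{v\in V(H)}x_v$. For integers $n,a,b$ with $0\le a\le b$ and $a+b\le\lfloor\frac{n-1}{2}\rfloor$, put $\ell=n-a-b$ and $I=\{1,\dots,a\}\cup\{\ell-b,\dots,\ell-1\}$; $T(n,a,b)$ is the hypertree with vertex set $\{v_1,\dots,v_\ell\}\cup\{w_i:i\in I\}$ and edges $\{v_i,w_i,v_{i+1}\}$ for $i\in I$ and $\{v_i,v_{i+1}\}$ for $i\in\{1,\dots,\ell-1\}\setminus I$. *)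

theory Defs
  imports Complex_Main
begin

definition loose_path :: "'a set set \<Rightarrow> 'a list \<Rightarrow> 'a set list \<Rightarrow> bool" where
  "loose_path E vs es \<longleftrightarrow>
     length vs = length es + 1 \<and> distinct vs \<and> distinct es \<and> set es \<subseteq> E \<and>
     (\<forall>i<length es. vs ! i \<in> es ! i \<and> vs ! Suc i \<in> es ! i) \<and>
     (\<forall>i j. Suc i < j \<and> j < length es \<longrightarrow> es ! i \<inter> es ! j = {})"

definition hdist :: "'a set set \<Rightarrow> 'a \<Rightarrow> 'a \<Rightarrow> nat" where
  "hdist E u v = (LEAST p. \<exists>vs es. loose_path E vs es \<and> hd vs = u \<and> last vs = v \<and> length es = p)"

definition dist_spec_radius :: "'a set \<Rightarrow> 'a set set \<Rightarrow> real" where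
  "dist_spec_radius V E = Max {r. \<exists>y :: 'a \<Rightarrow> real. (\<exists>u\<in>V. y u \<noteq> 0) \<and>
      (\<forall>u\<in>V. (\<Sum>v\<in>V. real (hdist E u v) * y v) = r * y u)}"

definition perron_vector :: "'a set \<Rightarrow> 'a set set \<Rightarrow> ('a \<Rightarrow> real) \<Rightarrow> bool" where
  "perron_vector V E x \<longleftrightarrow> (\<forall>v\<in>V. x v > 0) \<and> (\<Sum>v\<in>V. (x v)\<^sup>2) = 1 \<and>
     (\<forall>u\<in>V. (\<Sum>v\<in>V. real (hdist E u v) * x v) = dist_spec_radius V E * x u)"

definition hcomponent :: "'a set \<Rightarrow> 'a set set \<Rightarrow> 'a \<Rightarrow> 'a set" where
  "hcomponent V E v = {u\<in>V. (v, u) \<in> {(x, y). \<exists>f\<in>E. x \<in> f \<and> y \<in> f}\<^sup>*}"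

datatype vtx = V nat | W nat

definition Tidx :: "nat \<Rightarrow> nat \<Rightarrow> nat \<Rightarrow> nat set" where
  "Tidx n a b = (let l = n - a - b in {1..a} \<union> {l - b..l - 1})"

definition Tverts :: "nat \<Rightarrow> nat \<Rightarrow> nat \<Rightarrow> vtx set" where
  "Tverts n a b = (let l = n - a - b in V ` {1..l} \<union> W ` Tidx n a b)"

definition Tedges :: "nat \<Rightarrow> nat \<Rightarrow> nat \<Rightarrow> vtx set set" where
  "Tedges n a b = (let l = n - a - b in
      (\<lambda>i. {V i, W i, V (Suc i)}) ` Tidx n a b \<union>
      (\<lambda>i. {V i, V (Suc i)}) ` ({1..l - 1} - Tidx n a b))"

end

theory Submission
  imports Defs
begin

text \<open>Measure positions along the spine of \<open>T(n,a,b)\<close> in half-edges: \<open>v\<^sub>i\<close> sits at \<open>2i\<close> and the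
  pendant vertex \<open>w\<^sub>i\<close> of the edge \<open>{v\<^sub>i, w\<^sub>i, v\<^sub>i\<^sub>+\<^sub>1}\<close> at \<open>2i + 1\<close>. Twice the distance of two
  vertices is then the difference of their positions plus one for each pendant endpoint. With
  \<open>p = \<ell> - b\<close>, the edge \<open>e\<close> has its pendant vertex \<open>w\<^sub>p\<close> at \<open>c = 2p + 1\<close>, and \<open>T\<^sub>1\<close>, \<open>T\<^sub>2\<close> consist
  of the vertices below and above \<open>c\<close>. Since \<open>2p \<le> \<ell>\<close> and \<open>p \<ge> a + 2\<close>, the reflection \<open>\<phi>\<close> about \<open>c\<close>
  maps \<open>T\<^sub>1\<close> injectively into \<open>T\<^sub>2\<close>, missing \<open>w\<^sub>p\<^sub>+\<^sub>1\<close>.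

  Subtracting the eigen-equations of \<open>x\<close> at \<open>u\<close> and at \<open>\<phi> u\<close> and using how \<open>\<phi>\<close> changes distances
  shows: the vector \<open>y = x \<circ> \<phi> - x\<close> on \<open>T\<^sub>1\<close>, plus the weight of \<open>T\<^sub>2 - \<phi>(T\<^sub>1)\<close> placed at \<open>v\<^sub>1\<close>,
  satisfies \<open>(\<rho> + h u) y u + (\<Sum>w. min (s u) (s w) y w) \<ge> 0\<close> for \<open>s u = c - pos u\<close> and \<open>h\<close> the
  indicator of pendant vertices, strictly at \<open>v\<^sub>1\<close>. Such a vector has positive sum, and its sum
  is \<open>\<sigma>\<^sub>T(T\<^sub>2) - \<sigma>\<^sub>T(T\<^sub>1)\<close>.\<close>

section \<open>Comparing a positive eigenvector across a reflection\<close>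

lemma min_kernel_sum_pos:
  fixes A :: "'a set" and y S H :: "'a \<Rightarrow> real" and \<rho> :: real
  assumes fin: "finite A" and \<rho>: "\<rho> > 0"
    and S_pos: "\<And>u. u \<in> A \<Longrightarrow> S u > 0" and H_nonneg: "\<And>u. u \<in> A \<Longrightarrow> H u \<ge> 0"
    and nonneg: "\<And>u. u \<in> A \<Longrightarrow> (\<rho> + H u) * y u + (\<Sum>w\<in>A. min (S u) (S w) * y w) \<ge> 0"
    and "u1 \<in> A" and pos: "(\<rho> + H u1) * y u1 + (\<Sum>w\<in>A. min (S u1) (S w) * y w) > 0"
  shows "(\<Sum>w\<in>A. y w) > 0"
proof (rule ccontr)
  assume sum_nonpos: "\<not> (\<Sum>w\<in>A. y w) > 0"
  \<comment> \<open>At a negative entry of least \<open>S\<close>, the row is at most \<open>(\<rho> + H u\<^sub>0) y u\<^sub>0 + S u\<^sub>0 \<Sum> y < 0\<close>.\<close>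
  have y_nonneg: "y u \<ge> 0" if "u \<in> A" for u
  proof (rule ccontr)
    assume "\<not> y u \<ge> 0"
    define N where "N = {u\<in>A. y u < 0}"
    have "N \<noteq> {}" "finite N" using \<open>u \<in> A\<close> \<open>\<not> y u \<ge> 0\<close> fin unfolding N_def by auto
    then obtain u0 where u0: "u0 \<in> N" and u0_least: "\<And>w. w \<in> N \<Longrightarrow> S u0 \<le> S w"
      using arg_min_if_finite[of N S] by (metis arg_min_least)
    have "u0 \<in> A" "y u0 < 0" using u0 unfolding N_def by auto
    have "min (S u0) (S w) * y w \<le> S u0 * y w" if "w \<in> A" for w
      using that u0_least[of w] unfolding N_def by (cases "y w < 0") (auto simp: mult_right_mono)
    then have "(\<Sum>w\<in>A. min (S u0) (S w) * y w) \<le> S u0 * (\<Sum>w\<in>A. y w)"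
      by (simp add: sum_distrib_left sum_mono)
    also have "\<dots> \<le> 0"
      using sum_nonpos S_pos[OF \<open>u0 \<in> A\<close>] by (simp add: mult_nonneg_nonpos)
    finally have "(\<rho> + H u0) * y u0 \<ge> 0" using nonneg[OF \<open>u0 \<in> A\<close>] by linarith
    moreover have "\<rho> + H u0 > 0" using \<rho> H_nonneg[OF \<open>u0 \<in> A\<close>] by linarith
    ultimately show False using \<open>y u0 < 0\<close> by (simp add: zero_le_mult_iff)
  qed
  then have "\<forall>w\<in>A. y w = 0"
    using sum_nonpos sum_nonneg_eq_0_iff[OF fin] by (metis linorder_not_le order_antisym sum_nonneg)
  then show False using pos \<open>u1 \<in> A\<close> by simp
qed

locale reflection_comparison =
  fixes VV A M :: "'a set" and \<phi> :: "'a \<Rightarrow> 'a" and d :: "'a \<Rightarrow> 'a \<Rightarrow> real"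
    and S H :: "'a \<Rightarrow> real" and x :: "'a \<Rightarrow> real" and \<rho> :: real
  assumes finite_VV: "finite VV"
    and A_subset: "A \<subseteq> VV" and M_subset: "M \<subseteq> VV" and A_M_disjoint: "A \<inter> M = {}"
    and A_nonempty: "A \<noteq> {}"
    and \<phi>_maps: "\<phi> ` A \<subseteq> VV - A - M" and inj_\<phi>: "inj_on \<phi> A"
    and rest_nonempty: "VV - A - M - \<phi> ` A \<noteq> {}"
    and d_reflect: "\<And>u w. u \<in> A \<Longrightarrow> w \<in> A \<Longrightarrow> d (\<phi> u) (\<phi> w) = d u w"
    and d_swap: "\<And>u w. u \<in> A \<Longrightarrow> w \<in> A \<Longrightarrow> d (\<phi> u) w = d u (\<phi> w)"
    and d_gain: "\<And>u w. u \<in> A \<Longrightarrow> w \<in> A \<Longrightarrow>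
      d u (\<phi> w) - d u w = min (S u) (S w) + (if u = w then H u else 0)"
    and d_middle: "\<And>u m. u \<in> A \<Longrightarrow> m \<in> M \<Longrightarrow> d u m \<le> d (\<phi> u) m"
    and d_rest: "\<And>u z. u \<in> A \<Longrightarrow> z \<in> VV - A - M - \<phi> ` A \<Longrightarrow> d u z - S u \<le> d (\<phi> u) z"
    and S_pos: "\<And>u. u \<in> A \<Longrightarrow> S u > 0" and H_nonneg: "\<And>u. u \<in> A \<Longrightarrow> H u \<ge> 0"
    and eigen: "\<And>u. u \<in> VV \<Longrightarrow> (\<Sum>v\<in>VV. d u v * x v) = \<rho> * x u"
    and x_pos: "\<And>v. v \<in> VV \<Longrightarrow> x v > 0" and \<rho>_pos: "\<rho> > 0"
begin

lemma sum_VV_split: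
  "(\<Sum>v\<in>VV. f v) = (\<Sum>w\<in>A. f w + f (\<phi> w)) + (\<Sum>m\<in>M. f m) + (\<Sum>z\<in>VV - A - M - \<phi> ` A. f z)"
proof -
  let ?R = "VV - A - M - \<phi> ` A"
  have fin: "finite A" "finite M" "finite (\<phi> ` A)" "finite ?R"
    using A_subset M_subset finite_VV by (auto intro: finite_subset)
  have "VV = A \<union> (\<phi> ` A \<union> (M \<union> ?R))"
    using A_subset M_subset \<phi>_maps by blast
  then have "(\<Sum>v\<in>VV. f v) = (\<Sum>v\<in>A \<union> (\<phi> ` A \<union> (M \<union> ?R)). f v)"
    by (rule arg_cong)
  also have "\<dots> = (\<Sum>w\<in>A. f w) + ((\<Sum>v\<in>\<phi> ` A. f v) + ((\<Sum>m\<in>M. f m) + (\<Sum>z\<in>?R. f z)))"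
    using fin A_M_disjoint \<phi>_maps
    by (subst sum.union_disjoint; (subst sum.union_disjoint)?; (subst sum.union_disjoint)?) auto
  finally show ?thesis by (simp add: sum.distrib sum.reindex[OF inj_\<phi>] add.assoc)
qed

lemma reflected_pair_contribution:
  assumes "u \<in> A" "w \<in> A"
  shows "(d (\<phi> u) w - d u w) * x w + (d (\<phi> u) (\<phi> w) - d u (\<phi> w)) * x (\<phi> w)
       = - (min (S u) (S w) + (if u = w then H u else 0)) * (x (\<phi> w) - x w)"
  using d_swap[OF assms] d_reflect[OF assms] d_gain[OF assms] by (simp add: algebra_simps)

lemma reflected_difference_bound:
  assumes u: "u \<in> A"
  shows "0 \<le> \<rho> * (x (\<phi> u) - x u) + H u * (x (\<phi> u) - x u)
    + (\<Sum>w\<in>A. min (S u) (S w) * (x (\<phi> w) - x w)) + S u * (\<Sum>z\<in>VV - A - M - \<phi> ` A. x z)"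
proof -
  define F where "F v = (d (\<phi> u) v - d u v) * x v" for v
  have "u \<in> VV" "\<phi> u \<in> VV" using u A_subset \<phi>_maps by auto
  then have "\<rho> * (x (\<phi> u) - x u) = (\<Sum>v\<in>VV. F v)"
    unfolding F_def using eigen by (simp add: right_diff_distrib left_diff_distrib sum_subtractf)
  also have "\<dots> = (\<Sum>w\<in>A. F w + F (\<phi> w)) + (\<Sum>m\<in>M. F m) + (\<Sum>z\<in>VV - A - M - \<phi> ` A. F z)"
    by (rule sum_VV_split)
  finally have eq: "\<rho> * (x (\<phi> u) - x u)
    = (\<Sum>w\<in>A. F w + F (\<phi> w)) + (\<Sum>m\<in>M. F m) + (\<Sum>z\<in>VV - A - M - \<phi> ` A. F z)" .
  have pairs: "(\<Sum>w\<in>A. F w + F (\<phi> w))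
      = - (\<Sum>w\<in>A. min (S u) (S w) * (x (\<phi> w) - x w)) - H u * (x (\<phi> u) - x u)"
  proof -
    have "(\<Sum>w\<in>A. F w + F (\<phi> w)) = (\<Sum>w\<in>A. - (min (S u) (S w) * (x (\<phi> w) - x w))
        - (if u = w then H u * (x (\<phi> u) - x u) else 0))"
    proof (rule sum.cong)
      fix w assume w: "w \<in> A"
      have "F w + F (\<phi> w) = - (min (S u) (S w) + (if u = w then H u else 0)) * (x (\<phi> w) - x w)"
        unfolding F_def by (rule reflected_pair_contribution[OF u w])
      then show "F w + F (\<phi> w) = - (min (S u) (S w) * (x (\<phi> w) - x w))
          - (if u = w then H u * (x (\<phi> u) - x u) else 0)"
        by (cases "u = w") (simp_all add: algebra_simps)
    qed simp
    also have "\<dots> = - (\<Sum>w\<in>A. min (S u) (S w) * (x (\<phi> w) - x w)) - H u * (x (\<phi> u) - x u)"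
      using u A_subset finite_VV by (simp add: sum_subtractf sum_negf finite_subset)
    finally show ?thesis .
  qed
  have middle: "(\<Sum>m\<in>M. F m) \<ge> 0"
    unfolding F_def using d_middle[OF u] x_pos M_subset
    by (intro sum_nonneg mult_nonneg_nonneg) (auto simp: less_imp_le subset_iff)
  have rest: "(\<Sum>z\<in>VV - A - M - \<phi> ` A. F z) \<ge> (\<Sum>z\<in>VV - A - M - \<phi> ` A. - S u * x z)"
  proof (rule sum_mono)
    fix z assume z: "z \<in> VV - A - M - \<phi> ` A"
    then have "- S u \<le> d (\<phi> u) z - d u z" "x z > 0" using d_rest[OF u z] x_pos by auto
    then show "- S u * x z \<le> F z" unfolding F_def by (intro mult_right_mono) auto
  qed
  moreover have "(\<Sum>z\<in>VV - A - M - \<phi> ` A. - S u * x z) = - S u * (\<Sum>z\<in>VV - A - M - \<phi> ` A. x z)"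
    by (simp add: sum_distrib_left)
  ultimately show ?thesis using eq pairs middle by linarith
qed

text \<open>Placing the weight of the unmatched part of the far side at a vertex of maximal \<open>S\<close>
  makes every row of the min-kernel system nonnegative.\<close>

lemma shifted_difference_row:
  assumes u: "u \<in> A" and u1: "u1 \<in> A" and u1_max: "\<And>w. w \<in> A \<Longrightarrow> S w \<le> S u1"
    and y: "\<And>w. y w = x (\<phi> w) - x w + (if w = u1 then (\<Sum>z\<in>VV - A - M - \<phi> ` A. x z) else 0)"
  shows "(\<rho> + H u) * y u + (\<Sum>w\<in>A. min (S u) (S w) * y w)
    \<ge> (if u = u1 then (\<rho> + H u1) * (\<Sum>z\<in>VV - A - M - \<phi> ` A. x z) else 0)"
proof -
  let ?XR = "\<Sum>z\<in>VV - A - M - \<phi> ` A. x z"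
  have "finite A" using A_subset finite_VV by (rule finite_subset)
  then have "(\<Sum>w\<in>A. min (S u) (S w) * y w)
      = (\<Sum>w\<in>A. min (S u) (S w) * (x (\<phi> w) - x w)) + min (S u) (S u1) * ?XR"
    unfolding y using u1
    by (simp add: distrib_left sum.distrib if_distrib[of "(*) _"] sum.delta cong: if_cong)
  moreover have "min (S u) (S u1) = S u" using u1_max[OF u] by simp
  ultimately show ?thesis
    using reflected_difference_bound[OF u] unfolding y by (cases "u = u1") (simp_all add: algebra_simps)
qed

theorem sum_less_sum_other_side: "(\<Sum>v\<in>A. x v) < (\<Sum>v\<in>VV - A - M. x v)"
proof -
  define R where "R = VV - A - M - \<phi> ` A"
  define XR where "XR = (\<Sum>z\<in>R. x z)"
  have fin: "finite A" "finite R" using A_subset finite_VV unfolding R_def by (auto intro: finite_subset)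
  have "XR > 0"
    unfolding XR_def using rest_nonempty fin(2) x_pos by (intro sum_pos) (auto simp: R_def)
  have "Max (S ` A) \<in> S ` A" using fin(1) A_nonempty by simp
  then obtain u1 where u1: "u1 \<in> A" and "S u1 = Max (S ` A)" by (metis imageE)
  then have u1_max: "S u \<le> S u1" if "u \<in> A" for u using fin(1) that by simp
  define y where "y w = x (\<phi> w) - x w + (if w = u1 then XR else 0)" for w
  note row = shifted_difference_row[OF _ u1 u1_max y_def[unfolded XR_def R_def], folded R_def XR_def]
  have "(\<rho> + H u1) * XR > 0"
    using \<rho>_pos H_nonneg[OF u1] \<open>XR > 0\<close> by (intro mult_pos_pos) auto
  have "(\<Sum>w\<in>A. y w) > 0"
  proof (rule min_kernel_sum_pos[OF fin(1) \<rho>_pos S_pos H_nonneg _ u1])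
    show "0 \<le> (\<rho> + H u) * y u + (\<Sum>w\<in>A. min (S u) (S w) * y w)" if "u \<in> A" for u
      using row[OF that] \<open>(\<rho> + H u1) * XR > 0\<close> by (cases "u = u1") auto
    show "0 < (\<rho> + H u1) * y u1 + (\<Sum>w\<in>A. min (S u1) (S w) * y w)"
      using row[OF u1] \<open>(\<rho> + H u1) * XR > 0\<close> by simp
  qed
  moreover have "(\<Sum>w\<in>A. y w) = (\<Sum>v\<in>VV - A - M. x v) - (\<Sum>v\<in>A. x v)"
  proof -
    have "VV - A - M = \<phi> ` A \<union> R" "\<phi> ` A \<inter> R = {}" using \<phi>_maps unfolding R_def by auto
    then have "(\<Sum>v\<in>VV - A - M. x v) = (\<Sum>w\<in>A. x (\<phi> w)) + XR"
      using fin by (simp add: sum.union_disjoint sum.reindex[OF inj_\<phi>] XR_def)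
    then show ?thesis
      unfolding y_def using fin(1) u1 by (simp add: sum.distrib sum_subtractf)
  qed
  ultimately show ?thesis by simp
qed

end

lemma perron_root_pos:
  assumes "perron_vector VV E x" and "finite VV" and "u \<in> VV" "v \<in> VV" and "hdist E u v > 0"
  shows "dist_spec_radius VV E > 0"
proof -
  have x_pos: "\<forall>w\<in>VV. x w > 0"
    and eigen: "(\<Sum>w\<in>VV. real (hdist E u w) * x w) = dist_spec_radius VV E * x u"
    using assms(1,3) unfolding perron_vector_def by auto
  have "0 < real (hdist E u v) * x v" using assms(4,5) x_pos by simp
  also have "\<dots> \<le> (\<Sum>w\<in>VV. real (hdist E u w) * x w)"
    using assms(2,4) x_pos by (intro member_le_sum) (auto simp: less_imp_le)
  also have "\<dots> = dist_spec_radius VV E * x u" by (rule eigen)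
  finally show ?thesis using x_pos assms(3) by (auto simp: zero_less_mult_iff)
qed

section \<open>Distances and components of spine hypertrees\<close>

lemma loose_path_endpoint_bound:
  fixes f :: "'a \<Rightarrow> 'a \<Rightarrow> int"
  assumes f_refl: "\<And>u. f u u = 0" and triangle: "\<And>u v w. f u v \<le> f u w + f w v"
    and edge_bound: "\<And>e u v. e \<in> E \<Longrightarrow> u \<in> e \<Longrightarrow> v \<in> e \<Longrightarrow> f u v \<le> c"
    and path: "loose_path E vs es"
  shows "f (hd vs) (last vs) \<le> c * int (length es)"
proof -
  have len: "length vs = length es + 1"
    and inc: "\<forall>i<length es. vs ! i \<in> es ! i \<and> vs ! Suc i \<in> es ! i" and sub: "set es \<subseteq> E"
    using path unfolding loose_path_def by auto
  have "f (vs ! 0) (vs ! k) \<le> c * int k" if "k \<le> length es" for k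
    using that
  proof (induction k)
    case 0
    then show ?case using f_refl by simp
  next
    case (Suc k)
    then have "f (vs ! k) (vs ! Suc k) \<le> c"
      using edge_bound[of "es ! k"] inc sub by (simp add: subset_code(1))
    then show ?case
      using Suc triangle[of "vs ! 0" "vs ! Suc k" "vs ! k"] by (simp add: algebra_simps)
  qed
  moreover have "vs \<noteq> []" using len by auto
  ultimately show ?thesis
    using len by (simp add: hd_conv_nth last_conv_nth)
qed

lemma loose_path_rev:
  assumes "loose_path E vs es"
  shows "loose_path E (rev vs) (rev es)"
proof -
  have len: "length vs = length es + 1"
    and inc: "\<forall>i<length es. vs ! i \<in> es ! i \<and> vs ! Suc i \<in> es ! i"
    and disj: "\<forall>i j. Suc i < j \<and> j < length es \<longrightarrow> es ! i \<inter> es ! j = {}"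
    using assms unfolding loose_path_def by auto
  have "rev vs ! i \<in> rev es ! i \<and> rev vs ! Suc i \<in> rev es ! i" if "i < length es" for i
  proof -
    have "rev vs ! i = vs ! Suc (length es - Suc i)" "rev vs ! Suc i = vs ! (length es - Suc i)"
      "rev es ! i = es ! (length es - Suc i)"
      using that len by (simp_all add: rev_nth Suc_diff_Suc)
    then show ?thesis using inc that by simp
  qed
  moreover have "rev es ! i \<inter> rev es ! j = {}" if "Suc i < j" "j < length es" for i j
  proof -
    have "rev es ! i = es ! (length es - Suc i)" "rev es ! j = es ! (length es - Suc j)"
      using that by (auto simp: rev_nth)
    moreover have "es ! (length es - Suc j) \<inter> es ! (length es - Suc i) = {}"
      using disj[rule_format, of "length es - Suc j" "length es - Suc i"] that by linarith
    ultimately show ?thesis by blast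
  qed
  ultimately show ?thesis using assms unfolding loose_path_def by auto
qed

lemma loose_path_map:
  assumes "inj_on f {0..L}" and "inj_on g {0..<L}" and "\<forall>k<L. g k \<in> E"
    and "\<forall>k<L. f k \<in> g k \<and> f (Suc k) \<in> g k"
    and "\<forall>i j. Suc i < j \<and> j < L \<longrightarrow> g i \<inter> g j = {}"
  shows "loose_path E (map f [0..<Suc L]) (map g [0..<L])"
proof -
  have "{0..<Suc L} = {0..L}" by auto
  then show ?thesis
    using assms unfolding loose_path_def by (auto simp: distinct_map nth_append simp del: upt_Suc)
qed

definition hadj :: "'a set set \<Rightarrow> ('a \<times> 'a) set" where
  "hadj E = {(x, y). \<exists>f\<in>E. x \<in> f \<and> y \<in> f}"

lemma hcomponent_hadj: "hcomponent VV E v = {u\<in>VV. (v, u) \<in> (hadj E)\<^sup>*}"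
  unfolding hcomponent_def hadj_def by simp

lemma sym_hadj: "sym (hadj E)"
  unfolding hadj_def sym_def by blast

definition spine_edge :: "nat set \<Rightarrow> nat \<Rightarrow> vtx set" where
  "spine_edge J k = (if k \<in> J then {V k, W k, V (Suc k)} else {V k, V (Suc k)})"

definition spine_edges :: "nat \<Rightarrow> nat set \<Rightarrow> vtx set set" where
  "spine_edges l J = spine_edge J ` {1..l-1}"

definition spine_verts :: "nat \<Rightarrow> nat set \<Rightarrow> vtx set" where
  "spine_verts l J = V ` {1..l} \<union> W ` J"

lemma Tverts_eq_spine_verts: "Tverts n a b = spine_verts (n - a - b) (Tidx n a b)"
  unfolding Tverts_def spine_verts_def by simp

lemma Tedges_eq_spine_edges:
  assumes "Tidx n a b \<subseteq> {1..n - a - b - 1}"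
  shows "Tedges n a b = spine_edges (n - a - b) (Tidx n a b)"
proof -
  have "(\<lambda>i. {V i, W i, V (Suc i)}) ` J \<union> (\<lambda>i. {V i, V (Suc i)}) ` (K - J) = spine_edge J ` K"
    if "J \<subseteq> K" for J K :: "nat set"
    using that unfolding spine_edge_def by (auto simp: image_iff)
  from this[OF assms] show ?thesis unfolding Tedges_def spine_edges_def Let_def .
qed

lemma spine_edge_inj:
  assumes "spine_edge J i = spine_edge J k"
  shows "i = k"
proof -
  have "V i \<in> spine_edge J k" "V k \<in> spine_edge J i"
    using assms unfolding spine_edge_def by (auto split: if_splits)
  then show ?thesis unfolding spine_edge_def by (auto split: if_splits)
qed

lemma spine_edges_disjoint: "Suc i < k \<Longrightarrow> spine_edge J i \<inter> spine_edge J k = {}"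
  unfolding spine_edge_def by auto

fun pos :: "vtx \<Rightarrow> int" where
  "pos (V i) = 2 * int i"
| "pos (W i) = 2 * int i + 1"

fun pendant :: "vtx \<Rightarrow> int" where
  "pendant (V i) = 0"
| "pendant (W i) = 1"

lemma pos_inj: "pos u = pos v \<Longrightarrow> u = v"
  by (cases u; cases v) (auto, presburger+)

lemma pendant_bounds: "0 \<le> pendant u" "pendant u \<le> 1"
  by (cases u; simp)+

definition twice_dist :: "vtx \<Rightarrow> vtx \<Rightarrow> int" where
  "twice_dist u v = (if u = v then 0 else \<bar>pos u - pos v\<bar> + pendant u + pendant v)"

lemma twice_dist_sym: "twice_dist u v = twice_dist v u"
  unfolding twice_dist_def by auto

lemma twice_dist_triangle: "twice_dist u v \<le> twice_dist u w + twice_dist w v"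
  using pendant_bounds[of u] pendant_bounds[of v] pendant_bounds[of w]
  unfolding twice_dist_def by auto

lemma twice_dist_self [simp]: "twice_dist u u = 0"
  unfolding twice_dist_def by simp

lemma twice_dist_spine_edges:
  "e \<in> spine_edges l J \<Longrightarrow> u \<in> e \<Longrightarrow> v \<in> e \<Longrightarrow> twice_dist u v \<le> 2"
  unfolding spine_edges_def spine_edge_def twice_dist_def by (auto split: if_splits)

definition twice_dist_attained :: "vtx set set \<Rightarrow> vtx \<Rightarrow> vtx \<Rightarrow> bool" where
  "twice_dist_attained E u v \<longleftrightarrow>
     (\<exists>vs es. loose_path E vs es \<and> hd vs = u \<and> last vs = v \<and> 2 * int (length es) = twice_dist u v)"

lemma twice_dist_attained_refl: "twice_dist_attained E u u"
  unfolding twice_dist_attained_def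
  by (rule exI[of _ "[u]"], rule exI[of _ "[]"]) (simp add: loose_path_def twice_dist_def)

lemma twice_dist_attained_sym:
  assumes "twice_dist_attained E u v"
  shows "twice_dist_attained E v u"
proof -
  obtain vs es where path: "loose_path E vs es" "hd vs = u" "last vs = v"
    "2 * int (length es) = twice_dist u v"
    using assms unfolding twice_dist_attained_def by blast
  then have "vs \<noteq> []" unfolding loose_path_def by auto
  then show ?thesis
    unfolding twice_dist_attained_def using path loose_path_rev[OF path(1)]
    by (intro exI[of _ "rev vs"] exI[of _ "rev es"]) (simp add: hd_rev last_rev twice_dist_sym)
qed

lemma twice_dist_attained_spine_walk:
  assumes "1 \<le> i" and "i + L \<le> l" and "inj_on f {0..L}"
    and "\<forall>k<L. f k \<in> spine_edge J (i + k) \<and> f (Suc k) \<in> spine_edge J (i + k)"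
    and "f 0 = u" and "f L = v" and "2 * int L = twice_dist u v"
  shows "twice_dist_attained (spine_edges l J) u v"
proof -
  have "loose_path (spine_edges l J) (map f [0..<Suc L]) (map (\<lambda>k. spine_edge J (i + k)) [0..<L])"
  proof (rule loose_path_map)
    show "inj_on (\<lambda>k. spine_edge J (i + k)) {0..<L}"
      by (auto simp: inj_on_def dest: spine_edge_inj)
    show "\<forall>k<L. spine_edge J (i + k) \<in> spine_edges l J"
      using assms(1,2) unfolding spine_edges_def by auto
    show "\<forall>k k'. Suc k < k' \<and> k' < L \<longrightarrow> spine_edge J (i + k) \<inter> spine_edge J (i + k') = {}"
      using spine_edges_disjoint by (metis add_Suc_right nat_add_left_cancel_less)
  qed (use assms in auto)
  then show ?thesis
    unfolding twice_dist_attained_def using assms(5-7)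
    by (intro exI[of _ "map f [0..<Suc L]"] exI[of _ "map (\<lambda>k. spine_edge J (i + k)) [0..<L]"])
      (simp add: hd_map last_map del: upt_Suc)
qed

lemma twice_dist_attained_VV:
  assumes "1 \<le> i" "i < j" "j \<le> l"
  shows "twice_dist_attained (spine_edges l J) (V i) (V j)"
  by (rule twice_dist_attained_spine_walk[where i=i and L="j-i" and f="\<lambda>k. V (i+k)"])
    (use assms in \<open>auto simp: inj_on_def spine_edge_def twice_dist_def\<close>)

lemma twice_dist_attained_VW:
  assumes "1 \<le> i" "i \<le> j" "j \<in> J" "J \<subseteq> {1..l-1}"
  shows "twice_dist_attained (spine_edges l J) (V i) (W j)"
proof -
  have "j + 1 \<le> l" using assms(3,4) by force
  moreover have "i + k \<in> J" if "k < Suc (j - i)" "\<not> Suc k \<le> j - i" for k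
  proof -
    have "i + k = j" using that assms(2) by arith
    then show ?thesis using assms(3) by simp
  qed
  ultimately show ?thesis
    by (intro twice_dist_attained_spine_walk[where i=i and L="j-i+1"
          and f="\<lambda>k. if k \<le> j - i then V (i+k) else W j"])
      (use assms in \<open>auto simp: inj_on_def spine_edge_def twice_dist_def\<close>)
qed

lemma twice_dist_attained_WV:
  assumes "i < j" "j \<le> l" "i \<in> J" "J \<subseteq> {1..l-1}"
  shows "twice_dist_attained (spine_edges l J) (W i) (V j)"
proof -
  have "1 \<le> i" using assms(3,4) by force
  then show ?thesis
    by (intro twice_dist_attained_spine_walk[where i=i and L="j-i"
          and f="\<lambda>k. if k = 0 then W i else V (i+k)"])
      (use assms in \<open>auto simp: inj_on_def spine_edge_def twice_dist_def\<close>)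
qed

lemma twice_dist_attained_WW:
  assumes "i < j" "i \<in> J" "j \<in> J" "J \<subseteq> {1..l-1}"
  shows "twice_dist_attained (spine_edges l J) (W i) (W j)"
proof -
  have "1 \<le> i" "j + 1 \<le> l" using assms(2-4) by force+
  moreover have "i + k \<in> J" if "k < Suc (j - i)" "\<not> Suc k \<le> j - i" for k
  proof -
    have "i + k = j" using that assms(1) by arith
    then show ?thesis using assms(3) by simp
  qed
  ultimately show ?thesis
    by (intro twice_dist_attained_spine_walk[where i=i and L="j-i+1"
          and f="\<lambda>k. if k = 0 then W i else if k \<le> j - i then V (i+k) else W j"])
      (use assms in \<open>auto simp: inj_on_def spine_edge_def twice_dist_def\<close>)
qed

lemma twice_dist_attained_spine:
  assumes J: "J \<subseteq> {1..l-1}" and u: "u \<in> spine_verts l J" and v: "v \<in> spine_verts l J"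
  shows "twice_dist_attained (spine_edges l J) u v"
proof -
  have forward: "twice_dist_attained (spine_edges l J) u' v'"
    if "u' \<in> spine_verts l J" "v' \<in> spine_verts l J" "pos u' < pos v'" for u' v'
  proof (cases u'; cases v')
    fix i j assume "u' = V i" "v' = V j"
    with that show ?thesis by (auto simp: spine_verts_def intro!: twice_dist_attained_VV)
  next
    fix i j assume "u' = V i" "v' = W j"
    with that J show ?thesis by (auto simp: spine_verts_def intro!: twice_dist_attained_VW)
  next
    fix i j assume "u' = W i" "v' = V j"
    with that J show ?thesis by (auto simp: spine_verts_def intro!: twice_dist_attained_WV)
  next
    fix i j assume "u' = W i" "v' = W j"
    with that J show ?thesis by (auto simp: spine_verts_def intro!: twice_dist_attained_WW)
  qed
  consider "pos u < pos v" | "pos v < pos u" | "u = v" using pos_inj by fastforce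
  then show ?thesis
    using forward u v twice_dist_attained_sym twice_dist_attained_refl by cases blast+
qed

lemma hdist_spine:
  assumes "J \<subseteq> {1..l-1}" and "u \<in> spine_verts l J" and "v \<in> spine_verts l J"
  shows "2 * int (hdist (spine_edges l J) u v) = twice_dist u v"
proof -
  obtain vs es where path: "loose_path (spine_edges l J) vs es" "hd vs = u" "last vs = v"
    and len: "2 * int (length es) = twice_dist u v"
    using twice_dist_attained_spine[OF assms] unfolding twice_dist_attained_def by blast
  have "hdist (spine_edges l J) u v = length es"
    unfolding hdist_def
  proof (rule Least_equality)
    fix m assume "\<exists>vs es. loose_path (spine_edges l J) vs es \<and> hd vs = u \<and> last vs = v \<and> length es = m"
    then obtain vs' es' where "loose_path (spine_edges l J) vs' es'" "hd vs' = u" "last vs' = v"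
      "length es' = m"
      by blast
    moreover have "twice_dist (hd vs') (last vs') \<le> 2 * int (length es')"
      using loose_path_endpoint_bound[where f = twice_dist and c = 2, OF twice_dist_self twice_dist_triangle twice_dist_spine_edges
          \<open>loose_path _ vs' es'\<close>] by simp
    ultimately have "twice_dist u v \<le> 2 * int m" by simp
    then show "length es \<le> m" using len by simp
  qed (use path in blast)
  then show ?thesis using len by simp
qed

lemma hdist_spine_real:
  assumes "J \<subseteq> {1..l-1}" and "u \<in> spine_verts l J" and "v \<in> spine_verts l J"
  shows "real (hdist (spine_edges l J) u v) = real_of_int (twice_dist u v) / 2"
  using arg_cong[OF hdist_spine[OF assms], of real_of_int] by simp

lemma pos_spine_edge: "x \<in> spine_edge J k \<Longrightarrow> 2 * int k \<le> pos x \<and> pos x \<le> 2 * int k + 2"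
  unfolding spine_edge_def by (auto split: if_splits)

lemma spine_edges_cut_eq:
  assumes "e \<in> spine_edges l J" and "V p \<in> e" and "V (Suc p) \<in> e"
  shows "e = spine_edge J p"
proof -
  obtain k where "e = spine_edge J k" using assms(1) unfolding spine_edges_def by auto
  with assms(2,3) show ?thesis unfolding spine_edge_def by (auto split: if_splits)
qed

lemma hadj_spine_cut_side:
  assumes "(x, y) \<in> (hadj (spine_edges l J - {spine_edge J p}))\<^sup>*"
  shows "(pos x < 2 * int p + 1 \<longleftrightarrow> pos y < 2 * int p + 1)
       \<and> (pos x > 2 * int p + 1 \<longleftrightarrow> pos y > 2 * int p + 1)"
  using assms
proof (induction rule: rtrancl_induct)
  case (step y z)
  from step.hyps(2) obtain k where "spine_edge J k \<noteq> spine_edge J p"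
    and "y \<in> spine_edge J k" "z \<in> spine_edge J k"
    unfolding hadj_def spine_edges_def by blast
  then have "k < p \<or> p < k" by (metis linorder_neqE_nat)
  then show ?case
    using step.IH pos_spine_edge[OF \<open>y \<in> _\<close>] pos_spine_edge[OF \<open>z \<in> _\<close>] by auto
qed simp

lemma hadj_spine_cut_edge:
  assumes "1 \<le> k" "k + 1 \<le> l" "k \<noteq> p" "x \<in> spine_edge J k" "y \<in> spine_edge J k"
  shows "(x, y) \<in> hadj (spine_edges l J - {spine_edge J p})"
proof -
  have "spine_edge J k \<in> spine_edges l J - {spine_edge J p}"
    using assms(1-3) spine_edge_inj unfolding spine_edges_def by fastforce
  with assms(4,5) show ?thesis unfolding hadj_def by blast
qed

lemma hadj_spine_cut_chain:
  assumes "1 \<le> i" "i \<le> j" "j \<le> l" "p \<notin> {i..<j}"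
  shows "(V i, V j) \<in> (hadj (spine_edges l J - {spine_edge J p}))\<^sup>*"
  using assms(2)
proof (induction j rule: dec_induct)
  case (step k)
  then have "k \<noteq> p" "1 \<le> k" "k + 1 \<le> l" using assms by auto
  then have "(V k, V (Suc k)) \<in> hadj (spine_edges l J - {spine_edge J p})"
    by (intro hadj_spine_cut_edge) (auto simp: spine_edge_def)
  with step.IH show ?case by (rule rtrancl_into_rtrancl)
qed simp

lemma hadj_spine_cut_pendant:
  assumes "J \<subseteq> {1..l-1}" "j \<in> J" "j \<noteq> p"
  shows "(V j, W j) \<in> hadj (spine_edges l J - {spine_edge J p})"
proof -
  have "1 \<le> j" "j + 1 \<le> l" using assms(1,2) by force+
  with assms(2,3) show ?thesis by (intro hadj_spine_cut_edge[of j]) (auto simp: spine_edge_def)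
qed

lemma hcomponent_spine_cut_left:
  assumes J: "J \<subseteq> {1..l-1}" and p: "1 \<le> p" "p + 1 \<le> l"
  shows "hcomponent (spine_verts l J) (spine_edges l J - {spine_edge J p}) (V p)
       = {u \<in> spine_verts l J. pos u < 2 * int p + 1}"
proof -
  let ?R = "(hadj (spine_edges l J - {spine_edge J p}))\<^sup>*"
  have reach: "(V p, V i) \<in> ?R" if "1 \<le> i" "i \<le> p" for i
    using hadj_spine_cut_chain[of i p l p J] that p symD[OF sym_rtrancl[OF sym_hadj]] by auto
  have "(V p, u) \<in> ?R" if "u \<in> spine_verts l J" "pos u < 2 * int p + 1" for u
  proof (cases u)
    case (W j)
    with that J have "j \<in> J" "1 \<le> j" "j < p" by (auto simp: spine_verts_def)
    with J show ?thesis
      using reach[of j] hadj_spine_cut_pendant[of J l j p] W by (auto intro: rtrancl_into_rtrancl)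
  qed (use that reach in \<open>auto simp: spine_verts_def\<close>)
  then show ?thesis
    unfolding hcomponent_hadj using hadj_spine_cut_side[of "V p" _ l J p] by auto
qed

lemma hcomponent_spine_cut_right:
  assumes J: "J \<subseteq> {1..l-1}" and p: "1 \<le> p" "p + 1 \<le> l"
  shows "hcomponent (spine_verts l J) (spine_edges l J - {spine_edge J p}) (V (p + 1))
       = {u \<in> spine_verts l J. pos u > 2 * int p + 1}"
proof -
  let ?R = "(hadj (spine_edges l J - {spine_edge J p}))\<^sup>*"
  have reach: "(V (p + 1), V i) \<in> ?R" if "p + 1 \<le> i" "i \<le> l" for i
    using hadj_spine_cut_chain[of "p + 1" i l p J] that p by auto
  have "(V (p + 1), u) \<in> ?R" if "u \<in> spine_verts l J" "pos u > 2 * int p + 1" for u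
  proof (cases u)
    case (W j)
    with that J have "j \<in> J" "p < j" "j + 1 \<le> l" by (auto simp: spine_verts_def)
    with J show ?thesis
      using reach[of j] hadj_spine_cut_pendant[of J l j p] W by (auto intro: rtrancl_into_rtrancl)
  qed (use that reach in \<open>auto simp: spine_verts_def\<close>)
  then show ?thesis
    unfolding hcomponent_hadj using hadj_spine_cut_side[of "V (p + 1)" _ l J p] by auto
qed

section \<open>Reflecting about the pendant vertex of the cut edge\<close>

lemma twice_dist_reflect:
  assumes "pos u < c" "pos w < c"
    and "pos u' = 2 * c - pos u" "pendant u' = pendant u"
    and "pos w' = 2 * c - pos w" "pendant w' = pendant w"
  shows "twice_dist u' w' = twice_dist u w" and "twice_dist u' w = twice_dist u w'"
    and "twice_dist u w' - twice_dist u w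
      = 2 * (min (c - pos u) (c - pos w) + (if u = w then pendant u else 0))"
proof -
  have "u \<noteq> w'" "w \<noteq> u'" using assms(1-3,5) by auto
  moreover have "u = w \<longleftrightarrow> pos u = pos w" "u' = w' \<longleftrightarrow> pos u = pos w"
    using assms(3,5) pos_inj by auto
  ultimately show "twice_dist u' w' = twice_dist u w" "twice_dist u' w = twice_dist u w'"
    and "twice_dist u w' - twice_dist u w
      = 2 * (min (c - pos u) (c - pos w) + (if u = w then pendant u else 0))"
    using assms unfolding twice_dist_def by (auto simp: abs_if min_def)
qed

lemma twice_dist_reflect_center:
  assumes "pos u < c" "pos u' = 2 * c - pos u" "pendant u' = pendant u" "pos m = c"
  shows "twice_dist u' m = twice_dist u m"
  using assms pos_inj unfolding twice_dist_def by (auto simp: abs_if)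

lemma twice_dist_reflect_far:
  assumes "pos u < c" "pos u' = 2 * c - pos u" "pendant u' = pendant u" "pos z > c" "z \<noteq> u'"
  shows "twice_dist u z - 2 * (c - pos u) \<le> twice_dist u' z"
  using assms pos_inj[of z u'] unfolding twice_dist_def by (auto simp: abs_if)

fun spine_reflect :: "nat \<Rightarrow> vtx \<Rightarrow> vtx" where
  "spine_reflect p (V i) = V (2 * p + 1 - i)"
| "spine_reflect p (W j) = W (2 * p - j)"

lemma spine_reflect_coordinates:
  assumes "pos u < 2 * int p + 1"
  shows "pos (spine_reflect p u) = 2 * (2 * int p + 1) - pos u"
    and "pendant (spine_reflect p u) = pendant u"
  using assms by (cases u; simp add: of_nat_diff)+

context
  fixes a p l :: nat and J :: "nat set"
  assumes J: "J = {1..a} \<union> {p..l-1}" and p_lower: "a + 2 \<le> p" and p_upper: "2 * p \<le> l"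
begin

lemma spine_index_subset: "J \<subseteq> {1..l-1}"
  using J p_lower p_upper by auto

lemma finite_spine_verts: "finite (spine_verts l J)"
  unfolding spine_verts_def J by blast

lemma spine_reflect_mem:
  assumes u: "u \<in> spine_verts l J" "pos u < 2 * int p + 1"
  shows "spine_reflect p u \<in> spine_verts l J"
proof (cases u)
  case (V i)
  with u have "1 \<le> i" "i \<le> p" by (auto simp: spine_verts_def)
  then have "2 * p + 1 - i \<in> {1..l}" using p_upper by auto
  with V show ?thesis by (simp add: spine_verts_def)
next
  case (W j)
  with u J have "j \<in> J" "j < p" by (auto simp: spine_verts_def)
  with J have "2 * p - j \<in> J" using p_lower p_upper by auto
  with W show ?thesis by (simp add: spine_verts_def)
qed

lemma spine_reflect_not_onto_succ:
  "W (p + 1) \<notin> spine_reflect p ` {u \<in> spine_verts l J. pos u < 2 * int p + 1}"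
proof
  assume "W (p + 1) \<in> spine_reflect p ` {u \<in> spine_verts l J. pos u < 2 * int p + 1}"
  then obtain u where u: "u \<in> spine_verts l J" "pos u < 2 * int p + 1"
    and "W (p + 1) = spine_reflect p u"
    by blast
  then have "pos u = 2 * (2 * int p + 1) - pos (W (p + 1))"
    using spine_reflect_coordinates(1)[OF u(2)] by simp
  also have "\<dots> = pos (W (p - 1))" using p_lower by (simp add: of_nat_diff)
  finally have "u = W (p - 1)" by (rule pos_inj)
  moreover have "W (p - 1) \<notin> spine_verts l J" using J p_lower unfolding spine_verts_def by auto
  ultimately show False using u by simp
qed

lemma hdist_spine_reflect:
  assumes u: "u \<in> spine_verts l J" "pos u < 2 * int p + 1"
    and w: "w \<in> spine_verts l J" "pos w < 2 * int p + 1"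
  shows "hdist (spine_edges l J) (spine_reflect p u) (spine_reflect p w) = hdist (spine_edges l J) u w"
    and "hdist (spine_edges l J) (spine_reflect p u) w = hdist (spine_edges l J) u (spine_reflect p w)"
    and "real (hdist (spine_edges l J) u (spine_reflect p w)) - real (hdist (spine_edges l J) u w)
      = min (real_of_int (2 * int p + 1 - pos u)) (real_of_int (2 * int p + 1 - pos w))
        + (if u = w then real_of_int (pendant u) else 0)"
proof -
  note hd = hdist_spine[OF spine_index_subset]
  note refl = spine_reflect_mem[OF u] spine_reflect_mem[OF w]
  note td = twice_dist_reflect[OF u(2) w(2) spine_reflect_coordinates[OF u(2)]
      spine_reflect_coordinates[OF w(2)]]
  show "hdist (spine_edges l J) (spine_reflect p u) (spine_reflect p w) = hdist (spine_edges l J) u w"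
    "hdist (spine_edges l J) (spine_reflect p u) w = hdist (spine_edges l J) u (spine_reflect p w)"
    using hd[OF refl] hd[OF u(1) w(1)] hd[OF refl(1) w(1)] hd[OF u(1) refl(2)] td(1,2) by simp_all
  have "real_of_int (twice_dist u (spine_reflect p w)) - real_of_int (twice_dist u w)
    = 2 * (min (real_of_int (2 * int p + 1 - pos u)) (real_of_int (2 * int p + 1 - pos w))
      + (if u = w then real_of_int (pendant u) else 0))"
    using arg_cong[OF td(3), of real_of_int] by (cases "u = w") (simp_all add: of_int_min)
  then show "real (hdist (spine_edges l J) u (spine_reflect p w)) - real (hdist (spine_edges l J) u w)
    = min (real_of_int (2 * int p + 1 - pos u)) (real_of_int (2 * int p + 1 - pos w))
      + (if u = w then real_of_int (pendant u) else 0)"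
    using hdist_spine_real[OF spine_index_subset u(1) refl(2)]
      hdist_spine_real[OF spine_index_subset u(1) w(1)] by simp
qed

lemma hdist_spine_reflect_center:
  assumes u: "u \<in> spine_verts l J" "pos u < 2 * int p + 1"
  shows "hdist (spine_edges l J) (spine_reflect p u) (W p) = hdist (spine_edges l J) u (W p)"
proof -
  have Wp: "W p \<in> spine_verts l J" using J p_lower p_upper unfolding spine_verts_def by auto
  have "twice_dist (spine_reflect p u) (W p) = twice_dist u (W p)"
    by (rule twice_dist_reflect_center[OF u(2) spine_reflect_coordinates[OF u(2)]]) simp
  then show ?thesis
    using hdist_spine[OF spine_index_subset spine_reflect_mem[OF u] Wp]
      hdist_spine[OF spine_index_subset u(1) Wp] by simp
qed

lemma hdist_spine_reflect_far:
  assumes u: "u \<in> spine_verts l J" "pos u < 2 * int p + 1"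
    and z: "z \<in> spine_verts l J" "pos z > 2 * int p + 1" "z \<noteq> spine_reflect p u"
  shows "real (hdist (spine_edges l J) u z) - real_of_int (2 * int p + 1 - pos u)
    \<le> real (hdist (spine_edges l J) (spine_reflect p u) z)"
proof -
  have "twice_dist u z - 2 * (2 * int p + 1 - pos u) \<le> twice_dist (spine_reflect p u) z"
    by (rule twice_dist_reflect_far[OF u(2) spine_reflect_coordinates[OF u(2)] z(2,3)])
  then show ?thesis
    using hdist_spine_real[OF spine_index_subset u(1) z(1)]
      hdist_spine_real[OF spine_index_subset spine_reflect_mem[OF u] z(1)] by simp
qed

lemma spine_reflection_comparison:
  assumes perron: "perron_vector (spine_verts l J) (spine_edges l J) x"
  shows "reflection_comparison (spine_verts l J) {u \<in> spine_verts l J. pos u < 2 * int p + 1} {W p}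
    (spine_reflect p) (\<lambda>u v. real (hdist (spine_edges l J) u v))
    (\<lambda>u. real_of_int (2 * int p + 1 - pos u)) (\<lambda>u. real_of_int (pendant u))
    x (dist_spec_radius (spine_verts l J) (spine_edges l J))"
proof -
  let ?VV = "spine_verts l J" and ?A = "{u \<in> spine_verts l J. pos u < 2 * int p + 1}"
  have verts: "W p \<in> ?VV" "W (p + 1) \<in> ?VV" "V 1 \<in> ?VV" "V 2 \<in> ?VV"
    using J p_lower p_upper unfolding spine_verts_def by auto
  have refl_pos: "pos (spine_reflect p u) = 2 * (2 * int p + 1) - pos u" if "u \<in> ?A" for u
    using that spine_reflect_coordinates(1) by simp
  have "hdist (spine_edges l J) (V 1) (V 2) > 0"
    using hdist_spine[OF spine_index_subset verts(3,4)] by (simp add: twice_dist_def)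
  then have \<rho>_pos: "dist_spec_radius ?VV (spine_edges l J) > 0"
    using perron_root_pos[OF perron finite_spine_verts verts(3,4)] by simp
  show ?thesis
  proof unfold_locales
    show "spine_reflect p ` ?A \<subseteq> ?VV - ?A - {W p}"
      using spine_reflect_mem refl_pos by force
    show "inj_on (spine_reflect p) ?A"
    proof (rule inj_onI)
      fix u w assume "u \<in> ?A" "w \<in> ?A" "spine_reflect p u = spine_reflect p w"
      then have "pos u = pos w" using refl_pos[of u] refl_pos[of w] by simp
      then show "u = w" by (rule pos_inj)
    qed
    show "?VV - ?A - {W p} - spine_reflect p ` ?A \<noteq> {}"
      using spine_reflect_not_onto_succ verts(2) by auto
    have "V 1 \<in> ?A" using verts(3) p_lower by simp
    then show "?A \<noteq> {}" by blast
  next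
    fix u z assume u: "u \<in> ?A" and z: "z \<in> ?VV - ?A - {W p} - spine_reflect p ` ?A"
    then have "pos z \<noteq> 2 * int p + 1" using pos_inj[of z "W p"] by auto
    with u z show "real (hdist (spine_edges l J) u z) - real_of_int (2 * int p + 1 - pos u)
      \<le> real (hdist (spine_edges l J) (spine_reflect p u) z)"
      by (intro hdist_spine_reflect_far) auto
  qed (use perron finite_spine_verts verts \<rho>_pos pendant_bounds hdist_spine_reflect
      hdist_spine_reflect_center in \<open>auto simp: perron_vector_def\<close>)
qed

lemma spine_cut_component_sum_less:
  assumes perron: "perron_vector (spine_verts l J) (spine_edges l J) x"
  shows "(\<Sum>v\<in>hcomponent (spine_verts l J) (spine_edges l J - {spine_edge J p}) (V p). x v)
       < (\<Sum>v\<in>hcomponent (spine_verts l J) (spine_edges l J - {spine_edge J p}) (V (p + 1)). x v)"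
proof -
  let ?VV = "spine_verts l J"
  have "?VV - {u \<in> ?VV. pos u < 2 * int p + 1} - {W p} = {u \<in> ?VV. pos u > 2 * int p + 1}"
    using pos_inj[of _ "W p"] by force
  moreover have "1 \<le> p" "p + 1 \<le> l" using p_lower p_upper by auto
  ultimately show ?thesis
    using reflection_comparison.sum_less_sum_other_side[OF spine_reflection_comparison[OF perron]]
    by (simp only: hcomponent_spine_cut_left[OF spine_index_subset]
        hcomponent_spine_cut_right[OF spine_index_subset])
qed

end

theorem lemma3p1:
  fixes n a b :: nat and x :: "vtx \<Rightarrow> real" and e :: "vtx set"
  assumes "b \<ge> a + 2" and "2 * (a + b) < n - 1"
    and "perron_vector (Tverts n a b) (Tedges n a b) x"
    and "e \<in> Tedges n a b"
    and "V (n - a - b - b) \<in> e" and "V (n - a - b - b + 1) \<in> e"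
    and "2 * b \<ge> n - a - b"
  shows "(\<Sum>v\<in>hcomponent (Tverts n a b) (Tedges n a b - {e}) (V (n - a - b - b)). x v)
       < (\<Sum>v\<in>hcomponent (Tverts n a b) (Tedges n a b - {e}) (V (n - a - b - b + 1)). x v)"
proof -
  define l where "l = n - a - b"
  define p where "p = l - b"
  have J: "Tidx n a b = {1..a} \<union> {p..l-1}" unfolding Tidx_def p_def l_def by simp
  have ap: "a + 2 \<le> p" using assms(2) unfolding p_def l_def by arith
  have pl: "2 * p \<le> l" using assms(7) unfolding p_def l_def by arith
  have "Tidx n a b \<subseteq> {1..n - a - b - 1}" using J ap pl unfolding l_def by auto
  then have TE: "Tedges n a b = spine_edges l (Tidx n a b)"
    unfolding l_def by (rule Tedges_eq_spine_edges)
  have TV: "Tverts n a b = spine_verts l (Tidx n a b)"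
    unfolding l_def by (rule Tverts_eq_spine_verts)
  have "e = spine_edge (Tidx n a b) p"
    using spine_edges_cut_eq[of e l] assms(4-6) TE unfolding p_def l_def by simp
  then show ?thesis
    using spine_cut_component_sum_less[OF J ap pl] assms(3) TV TE unfolding p_def l_def by simp
qed

end
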